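(* Let $p$ be a prime, $k$ an integer with $3\le k\le p-1$, and $A\subseteq\mathbb{Z}/p\mathbb{Z}$ with $|A|\ge k+2$. Let \[ S_k(A)=\{a_1+a_2+k a_3 : a_1,a_2,a_3\in A \text{ pairwise distinct}\}. \] Then: (i) if $|A|\le (p+6)/3$, then $|S_k(A)|\ge 3|A|-6$; (ii) if $|A|=(p+7)/3$, then $|S_k(A)|\ge p-2$; (iii) if $|A|\ge (p+8)/3$, then $S_k(A)=\mathbb{Z}/p\mathbb{Z}$.
   Context: Here $k a_3$ denotes the $k$-fold multiple of $a_3$ in $\mathbb{Z}/p\mathbb{Z}$. *)

theory Defs
  imports "HOL-Computational_Algebra.Primes"
begin

text \<open>Z/pZ is represented by the residues {0..<p} (natural numbers); arithmetic is mod p.\<close>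

definition Sk :: "nat \<Rightarrow> nat \<Rightarrow> nat set \<Rightarrow> nat set" where
  "Sk p k A = {(a1 + a2 + k * a3) mod p | a1 a2 a3.
       a1 \<in> A \<and> a2 \<in> A \<and> a3 \<in> A \<and> a1 \<noteq> a2 \<and> a1 \<noteq> a3 \<and> a2 \<noteq> a3}"

end

theory Submission imports Defs "HOL-Computational_Algebra.Polynomial" begin

(* Proof strategy: a Combinatorial-Nullstellensatz argument with an explicit coefficient
   formula, carried out over the integers and reduced modulo p at the end.

   For finite sets X with |X| = n + 1, the Lagrange identity
     sum_{x in X} x^e / prod_{y in X - {x}} (x - y) = 0 (e < n),  = 1 (e = n)
   yields, after clearing denominators, integer weights w_X(x) with
   sum_{x in X} x^e w_X(x) = 0 for e < n and = disc X for e = n.  Summing a polynomial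
   F(x1,x2,x3) of total degree <= c1+c2+c3 against these weights over X1 x X2 x X3
   (|Xi| = ci + 1) extracts disc X1 disc X2 disc X3 times the coefficient of x1^c1 x2^c2 x3^c3.
   We take F = (x1-x2)(x1-x3)(x2-x3) q(x1+x2+k x3), where q vanishes on a set T of t
   residues covering the restricted sumset.  Every term of the weighted sum is divisible
   by p, while the extracted coefficient is, up to the unit a!b!c!, the number
   t! k^(c-2) (a-b) Q(k,a,b,c).  Hence if p divides none of these factors, the restricted
   sumset has at least t + 1 elements (lemma restricted_sumset_lower_bound).  Parts (i)-(iii)
   follow by choosing (a,b,c) suitably and checking that Q does not vanish mod p. *)

section \<open>The Lagrange identity\<close>

definition lagrange_sum :: "'a::field set \<Rightarrow> nat \<Rightarrow> 'a" where
  "lagrange_sum X e = (\<Sum>x\<in>X. x^e / (\<Prod>y\<in>X-{x}. (x - y)))"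

lemma lagrange_sum_Suc:
  assumes "finite X" "z \<in> X"
  shows "lagrange_sum X (Suc e) = z * lagrange_sum X e + lagrange_sum (X - {z}) e"
proof -
  have "lagrange_sum X (Suc e) - z * lagrange_sum X e
      = (\<Sum>x\<in>X. x^e * (x - z) / (\<Prod>y\<in>X-{x}. (x - y)))"
    unfolding lagrange_sum_def sum_distrib_left sum_subtractf[symmetric]
    by (rule sum.cong) (auto simp: algebra_simps diff_divide_distrib)
  also have "\<dots> = (\<Sum>x\<in>X-{z}. x^e * (x - z) / (\<Prod>y\<in>X-{x}. (x - y)))"
    using assms by (simp add: sum.remove)
  also have "\<dots> = lagrange_sum (X - {z}) e"
    unfolding lagrange_sum_def
  proof (rule sum.cong)
    fix x assume x: "x \<in> X - {z}"
    have "(\<Prod>y\<in>X-{x}. (x - y)) = (x - z) * (\<Prod>y\<in>X-{x}-{z}. (x - y))"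
      using assms x by (subst prod.remove[of _ z]) auto
    moreover have "X - {x} - {z} = X - {z} - {x}" by auto
    ultimately show "x^e * (x - z) / (\<Prod>y\<in>X-{x}. (x - y)) = x^e / (\<Prod>y\<in>X-{z}-{x}. (x - y))"
      using x by simp
  qed simp
  finally show ?thesis by (simp add: algebra_simps)
qed

lemma lagrange_sum_values:
  "finite X \<Longrightarrow> card X = Suc n \<Longrightarrow> (\<forall>e<n. lagrange_sum X e = 0) \<and> lagrange_sum X n = 1"
proof (induction n arbitrary: X)
  case 0
  then obtain z where "X = {z}" by (auto simp: card_Suc_eq)
  then show ?case by (simp add: lagrange_sum_def)
next
  case (Suc n)
  from Suc.prems obtain z1 z2 where z: "z1 \<in> X" "z2 \<in> X" "z1 \<noteq> z2"
    by (auto simp: card_Suc_eq)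
  have "card (X - {z1}) = Suc n" "card (X - {z2}) = Suc n" using Suc.prems z by auto
  then have IH1: "(\<forall>e<n. lagrange_sum (X - {z1}) e = 0) \<and> lagrange_sum (X - {z1}) n = 1"
    and IH2: "(\<forall>e<n. lagrange_sum (X - {z2}) e = 0) \<and> lagrange_sum (X - {z2}) n = 1"
    using Suc.IH Suc.prems(1) by auto
  have low: "lagrange_sum X e = 0" if "e \<le> n" for e
  proof -
    have "lagrange_sum X (Suc e) = z1 * lagrange_sum X e + lagrange_sum (X - {z1}) e"
      "lagrange_sum X (Suc e) = z2 * lagrange_sum X e + lagrange_sum (X - {z2}) e"
      using lagrange_sum_Suc Suc.prems z by blast+
    moreover have "lagrange_sum (X - {z1}) e = lagrange_sum (X - {z2}) e"
      using IH1 IH2 that by (cases "e = n") auto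
    ultimately have "z1 * lagrange_sum X e = z2 * lagrange_sum X e" by (metis add_right_cancel)
    then show ?thesis using z by simp
  qed
  have "lagrange_sum X (Suc n) = z1 * lagrange_sum X n + lagrange_sum (X - {z1}) n"
    using lagrange_sum_Suc Suc.prems z by blast
  then have "lagrange_sum X (Suc n) = 1" using low IH1 by simp
  then show ?case using low by (simp add: less_Suc_eq_le)
qed

text \<open>Clearing the denominators of the Lagrange identity over the integers:
  node_prod X x is the denominator at node x, node_weight X x the
  product of all other denominators, and disc X the product of all of them.\<close>
definition node_prod :: "int set \<Rightarrow> int \<Rightarrow> int" where
  "node_prod X x = (\<Prod>y\<in>X-{x}. (x - y))"

definition node_weight :: "int set \<Rightarrow> int \<Rightarrow> int" where
  "node_weight X x = (\<Prod>x'\<in>X-{x}. node_prod X x')"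

definition disc :: "int set \<Rightarrow> int" where
  "disc X = (\<Prod>x\<in>X. node_prod X x)"

definition moment :: "int set \<Rightarrow> nat \<Rightarrow> int" where
  "moment X e = (\<Sum>x\<in>X. x^e * node_weight X x)"

lemma node_prod_nonzero: "finite X \<Longrightarrow> node_prod X x \<noteq> 0"
  unfolding node_prod_def by (auto simp: prod_zero_iff)

lemma moment_eq_lagrange_sum:
  assumes "finite X"
  shows "(of_int (moment X e) :: rat) = of_int (disc X) * lagrange_sum (of_int ` X) e"
proof -
  have inj: "inj_on (of_int :: int \<Rightarrow> rat) S" for S by (auto simp: inj_on_def)
  have node: "(of_int (node_prod X x) :: rat) = (\<Prod>y\<in>of_int ` X - {of_int x}. (of_int x - y))"
    for x
  proof -
    have "of_int ` X - {(of_int x :: rat)} = of_int ` (X - {x})" by auto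
    then show ?thesis unfolding node_prod_def using inj by (simp add: prod.reindex)
  qed
  have weight: "(of_int (node_weight X x) :: rat) = of_int (disc X) / of_int (node_prod X x)"
    if "x \<in> X" for x
  proof -
    have "disc X = node_prod X x * node_weight X x"
      unfolding disc_def node_weight_def using assms that by (simp add: prod.remove)
    then show ?thesis using node_prod_nonzero[OF assms, of x] by simp
  qed
  have "(of_int (moment X e) :: rat)
      = (\<Sum>x\<in>X. of_int x ^ e * (of_int (disc X) / of_int (node_prod X x)))"
    unfolding moment_def by (simp add: weight)
  also have "\<dots> = of_int (disc X) *
      (\<Sum>x\<in>X. of_int x ^ e / (\<Prod>y\<in>of_int ` X - {of_int x}. (of_int x - y)))"
    by (simp add: sum_distrib_left node mult.commute)
  also have "\<dots> = of_int (disc X) * lagrange_sum (of_int ` X) e"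
    unfolding lagrange_sum_def using inj by (simp add: sum.reindex)
  finally show ?thesis .
qed

lemma moment_values:
  assumes "finite X" "card X = Suc n"
  shows moment_low: "e < n \<Longrightarrow> moment X e = 0" and moment_top: "moment X n = disc X"
proof -
  have "inj_on (of_int :: int \<Rightarrow> rat) X" by (auto simp: inj_on_def)
  then have "finite ((of_int :: int \<Rightarrow> rat) ` X)" "card ((of_int :: int \<Rightarrow> rat) ` X) = Suc n"
    using assms by (auto simp: card_image)
  note lagrange = lagrange_sum_values[OF this] moment_eq_lagrange_sum[OF assms(1)]
  show "e < n \<Longrightarrow> moment X e = 0"
  proof -
    assume "e < n"
    then have "(of_int (moment X e) :: rat) = 0" using lagrange by simp
    then show ?thesis by simp
  qed
  have "(of_int (moment X n) :: rat) = of_int (disc X)" using lagrange by simp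
  then show "moment X n = disc X" by simp
qed

section \<open>Weighted sums over a grid and their coefficient extraction\<close>

text \<open>Summing g against the integer weights over X1 x X2 x X3; for polynomials g of small
  degree this extracts a scaled top coefficient (Combinatorial Nullstellensatz).\<close>
definition tri_sum :: "int set \<Rightarrow> int set \<Rightarrow> int set \<Rightarrow> (int \<Rightarrow> int \<Rightarrow> int \<Rightarrow> int) \<Rightarrow> int" where
  "tri_sum X1 X2 X3 g = (\<Sum>x1\<in>X1. \<Sum>x2\<in>X2. \<Sum>x3\<in>X3.
      g x1 x2 x3 * node_weight X1 x1 * node_weight X2 x2 * node_weight X3 x3)"

lemma tri_sum_monomial:
  "tri_sum X1 X2 X3 (\<lambda>x1 x2 x3. x1^e1 * x2^e2 * x3^e3) = moment X1 e1 * moment X2 e2 * moment X3 e3"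
proof -
  have "tri_sum X1 X2 X3 (\<lambda>x1 x2 x3. x1^e1 * x2^e2 * x3^e3) =
      (\<Sum>x1\<in>X1. \<Sum>x2\<in>X2. \<Sum>x3\<in>X3. (x1^e1 * node_weight X1 x1) *
         ((x2^e2 * node_weight X2 x2) * (x3^e3 * node_weight X3 x3)))"
    unfolding tri_sum_def by (simp add: mult_ac)
  also have "\<dots> = moment X1 e1 * (moment X2 e2 * moment X3 e3)"
    unfolding moment_def by (simp only: sum_distrib_left[symmetric] sum_distrib_right[symmetric])
  finally show ?thesis by (simp add: mult_ac)
qed

lemma tri_sum_sum:
  "tri_sum X1 X2 X3 (\<lambda>x1 x2 x3. \<Sum>j\<in>J. G j x1 x2 x3) = (\<Sum>j\<in>J. tri_sum X1 X2 X3 (G j))"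
proof -
  have "tri_sum X1 X2 X3 (\<lambda>x1 x2 x3. \<Sum>j\<in>J. G j x1 x2 x3) =
    (\<Sum>x1\<in>X1. \<Sum>x2\<in>X2. \<Sum>x3\<in>X3. \<Sum>j\<in>J.
       G j x1 x2 x3 * node_weight X1 x1 * node_weight X2 x2 * node_weight X3 x3)"
    unfolding tri_sum_def by (simp add: sum_distrib_right)
  also have "\<dots> = (\<Sum>j\<in>J. \<Sum>x1\<in>X1. \<Sum>x2\<in>X2. \<Sum>x3\<in>X3.
       G j x1 x2 x3 * node_weight X1 x1 * node_weight X2 x2 * node_weight X3 x3)"
    by (simp only: sum.swap[of _ J])
  finally show ?thesis unfolding tri_sum_def .
qed

lemma tri_sum_cmult: "tri_sum X1 X2 X3 (\<lambda>x1 x2 x3. c * G x1 x2 x3) = c * tri_sum X1 X2 X3 G"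
  unfolding tri_sum_def by (simp add: sum_distrib_left mult_ac)

lemma tri_sum_add:
  "tri_sum X1 X2 X3 (\<lambda>x1 x2 x3. F x1 x2 x3 + G x1 x2 x3) = tri_sum X1 X2 X3 F + tri_sum X1 X2 X3 G"
  unfolding tri_sum_def by (simp add: sum.distrib algebra_simps)

lemma tri_sum_diff:
  "tri_sum X1 X2 X3 (\<lambda>x1 x2 x3. F x1 x2 x3 - G x1 x2 x3) = tri_sum X1 X2 X3 F - tri_sum X1 X2 X3 G"
  unfolding tri_sum_def by (simp add: sum_subtractf algebra_simps)

lemma trinomial_expansion:
  "(x1 + x2 + k * x3 :: int) ^ t = (\<Sum>l\<le>t. \<Sum>i\<le>t-l.
      int ((t choose l) * ((t-l) choose i)) * k^l * (x1^i * x2^(t-l-i) * x3^l))"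
proof -
  have "(x1 + x2 + k * x3) ^ t = (\<Sum>l\<le>t. of_nat (t choose l) * (k*x3)^l * (x1+x2)^(t-l))"
    using binomial_ring[of "k * x3" "x1 + x2" t] by (simp add: add_ac)
  also have "\<dots> = (\<Sum>l\<le>t. of_nat (t choose l) * (k*x3)^l *
      (\<Sum>i\<le>t-l. of_nat ((t-l) choose i) * x1^i * x2^(t-l-i)))"
    by (simp add: binomial_ring)
  also have "\<dots> = (\<Sum>l\<le>t. \<Sum>i\<le>t-l. int ((t choose l) * ((t-l) choose i)) * k^l *
      (x1^i * x2^(t-l-i) * x3^l))"
    by (simp add: sum_distrib_left power_mult_distrib mult_ac)
  finally show ?thesis .
qed

lemma tri_sum_expand:
  "tri_sum X1 X2 X3 (\<lambda>x1 x2 x3. x1^f1 * x2^f2 * x3^f3 * (x1 + x2 + k * x3)^t) =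
   (\<Sum>l\<le>t. \<Sum>i\<le>t-l. int ((t choose l) * ((t-l) choose i)) * k^l *
       (moment X1 (f1+i) * moment X2 (f2+(t-l-i)) * moment X3 (f3+l)))"
proof -
  have "(\<lambda>x1 x2 x3. x1^f1 * x2^f2 * x3^f3 * (x1 + x2 + k * x3)^t) =
    (\<lambda>x1 x2 x3. \<Sum>l\<le>t. \<Sum>i\<le>t-l. int ((t choose l) * ((t-l) choose i)) * k^l *
       (x1^(f1+i) * x2^(f2+(t-l-i)) * x3^(f3+l)))"
    unfolding trinomial_expansion sum_distrib_left
    by (intro ext sum.cong refl) (simp only: power_add mult_ac)
  then show ?thesis by (simp add: tri_sum_sum tri_sum_cmult tri_sum_monomial)
qed

lemma moment_prod_low:
  assumes "finite X1" "card X1 = Suc c1" "finite X2" "card X2 = Suc c2"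
    "finite X3" "card X3 = Suc c3" "e1 + e2 + e3 < c1 + c2 + c3"
  shows "moment X1 e1 * moment X2 e2 * moment X3 e3 = 0"
proof -
  have "e1 < c1 \<or> e2 < c2 \<or> e3 < c3" using assms(7) by linarith
  then show ?thesis using moment_low[OF assms(1,2)] moment_low[OF assms(3,4)] moment_low[OF assms(5,6)]
    by auto
qed

lemma moment_prod_top:
  assumes "finite X1" "card X1 = Suc c1" "finite X2" "card X2 = Suc c2"
    "finite X3" "card X3 = Suc c3" "e1 + e2 + e3 = c1 + c2 + c3"
  shows "moment X1 e1 * moment X2 e2 * moment X3 e3 =
    (if e1 = c1 \<and> e3 = c3 then disc X1 * disc X2 * disc X3 else 0)"
proof (cases "e1 = c1 \<and> e3 = c3")
  case True
  then show ?thesis using assms(7) moment_top[OF assms(1,2)] moment_top[OF assms(3,4)]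
      moment_top[OF assms(5,6)] by simp
next
  case False
  then have "e1 < c1 \<or> e2 < c2 \<or> e3 < c3" using assms(7) by linarith
  then show ?thesis using False moment_low[OF assms(1,2)] moment_low[OF assms(3,4)]
      moment_low[OF assms(5,6)] by auto
qed

text \<open>The coefficient of x1^c1 x2^c2 x3^c3 in x1^f1 x2^f2 x3^f3 (x1 + x2 + k x3)^t.\<close>
definition mono_coeff :: "nat \<Rightarrow> nat \<Rightarrow> nat \<Rightarrow> int \<Rightarrow> nat \<Rightarrow> nat \<Rightarrow> nat \<Rightarrow> nat \<Rightarrow> int" where
  "mono_coeff c1 c2 c3 k t f1 f2 f3 = (if f1 \<le> c1 \<and> f2 \<le> c2 \<and> f3 \<le> c3 then
      int ((t choose (c3-f3)) * ((t-(c3-f3)) choose (c1-f1))) * k^(c3-f3) else 0)"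

lemma tri_sum_power_low:
  assumes "finite X1" "card X1 = Suc c1" "finite X2" "card X2 = Suc c2"
    "finite X3" "card X3 = Suc c3" "f1 + f2 + f3 + t < c1 + c2 + c3"
  shows "tri_sum X1 X2 X3 (\<lambda>x1 x2 x3. x1^f1 * x2^f2 * x3^f3 * (x1 + x2 + k * x3)^t) = 0"
  unfolding tri_sum_expand
proof (intro sum.neutral ballI)
  fix l i assume "l \<in> {..t}" "i \<in> {..t-l}"
  then have "(f1+i) + (f2+(t-l-i)) + (f3+l) < c1 + c2 + c3" using assms(7) by auto
  then show "int ((t choose l) * ((t-l) choose i)) * k^l *
       (moment X1 (f1+i) * moment X2 (f2+(t-l-i)) * moment X3 (f3+l)) = 0"
    using moment_prod_low[OF assms(1-6)] by simp
qed

lemma double_sum_delta: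
  fixes t :: nat
  shows "(\<Sum>l\<le>t. \<Sum>i\<le>t-l. if l = L \<and> i = I then g l i else 0) =
   (if L \<le> t \<and> I \<le> t - L then g L I else (0::'a::comm_monoid_add))"
proof -
  have inner: "(\<Sum>i\<le>t-l. if l = L \<and> i = I then g l i else 0) =
      (if l = L then (if I \<le> t - L then g L I else 0) else 0)" for l
    by (cases "l = L") simp_all
  show ?thesis unfolding inner by (cases "I \<le> t - L") simp_all
qed

lemma tri_sum_power_top:
  assumes "finite X1" "card X1 = Suc c1" "finite X2" "card X2 = Suc c2"
    "finite X3" "card X3 = Suc c3" "f1 + f2 + f3 + t = c1 + c2 + c3"
  shows "tri_sum X1 X2 X3 (\<lambda>x1 x2 x3. x1^f1 * x2^f2 * x3^f3 * (x1 + x2 + k * x3)^t) =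
    mono_coeff c1 c2 c3 k t f1 f2 f3 * (disc X1 * disc X2 * disc X3)"
proof -
  define D where "D = disc X1 * disc X2 * disc X3"
  define L I where "L = c3 - f3" and "I = c1 - f1"
  define g where "g l i = int ((t choose l) * ((t-l) choose i)) * k^l * D" for l i
  have summand: "int ((t choose l) * ((t-l) choose i)) * k^l *
       (moment X1 (f1+i) * moment X2 (f2+(t-l-i)) * moment X3 (f3+l)) =
       (if l = L \<and> i = I then (if f1 \<le> c1 \<and> f3 \<le> c3 then g l i else 0) else 0)"
    if "l \<le> t" "i \<le> t - l" for l i
  proof -
    have "(f1+i) + (f2+(t-l-i)) + (f3+l) = c1 + c2 + c3" using assms(7) that by auto
    then show ?thesis using moment_prod_top[OF assms(1-6)] unfolding g_def D_def L_def I_def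
      by auto
  qed
  have "tri_sum X1 X2 X3 (\<lambda>x1 x2 x3. x1^f1 * x2^f2 * x3^f3 * (x1 + x2 + k * x3)^t) =
      (\<Sum>l\<le>t. \<Sum>i\<le>t-l. if l = L \<and> i = I then (if f1 \<le> c1 \<and> f3 \<le> c3 then g l i else 0) else 0)"
    unfolding tri_sum_expand by (intro sum.cong refl summand) auto
  also have "\<dots> = (if L \<le> t \<and> I \<le> t - L \<and> f1 \<le> c1 \<and> f3 \<le> c3 then g L I else 0)"
    by (simp add: double_sum_delta)
  also have "\<dots> = mono_coeff c1 c2 c3 k t f1 f2 f3 * D"
    unfolding mono_coeff_def g_def L_def I_def using assms(7) by auto
  finally show ?thesis unfolding D_def .
qed

abbreviation vandermonde3 :: "int \<Rightarrow> int \<Rightarrow> int \<Rightarrow> int" where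
  "vandermonde3 x1 x2 x3 \<equiv> (x1 - x2) * (x1 - x3) * (x2 - x3)"

text \<open>The coefficient of x1^c1 x2^c2 x3^c3 in vandermonde3 x1 x2 x3 * (x1 + x2 + k x3)^t,
  read off from the six monomials of the Vandermonde product.\<close>
definition sumset_coeff :: "nat \<Rightarrow> nat \<Rightarrow> nat \<Rightarrow> int \<Rightarrow> nat \<Rightarrow> int" where
  "sumset_coeff c1 c2 c3 k t =
       mono_coeff c1 c2 c3 k t 2 1 0 - mono_coeff c1 c2 c3 k t 2 0 1
     - mono_coeff c1 c2 c3 k t 1 2 0 + mono_coeff c1 c2 c3 k t 1 0 2
     + mono_coeff c1 c2 c3 k t 0 2 1 - mono_coeff c1 c2 c3 k t 0 1 2"

lemma tri_sum_vandermonde_split: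
  "tri_sum X1 X2 X3 (\<lambda>x1 x2 x3. vandermonde3 x1 x2 x3 * (x1 + x2 + k * x3)^t) =
     tri_sum X1 X2 X3 (\<lambda>x1 x2 x3. x1^2 * x2^1 * x3^0 * (x1 + x2 + k * x3)^t)
   - tri_sum X1 X2 X3 (\<lambda>x1 x2 x3. x1^2 * x2^0 * x3^1 * (x1 + x2 + k * x3)^t)
   - tri_sum X1 X2 X3 (\<lambda>x1 x2 x3. x1^1 * x2^2 * x3^0 * (x1 + x2 + k * x3)^t)
   + tri_sum X1 X2 X3 (\<lambda>x1 x2 x3. x1^1 * x2^0 * x3^2 * (x1 + x2 + k * x3)^t)
   + tri_sum X1 X2 X3 (\<lambda>x1 x2 x3. x1^0 * x2^2 * x3^1 * (x1 + x2 + k * x3)^t)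
   - tri_sum X1 X2 X3 (\<lambda>x1 x2 x3. x1^0 * x2^1 * x3^2 * (x1 + x2 + k * x3)^t)"
proof -
  have "(\<lambda>x1 x2 x3. vandermonde3 x1 x2 x3 * (x1 + x2 + k * x3)^t) =
    (\<lambda>x1 x2 x3. x1^2 * x2^1 * x3^0 * (x1 + x2 + k * x3)^t
     - x1^2 * x2^0 * x3^1 * (x1 + x2 + k * x3)^t
     - x1^1 * x2^2 * x3^0 * (x1 + x2 + k * x3)^t
     + x1^1 * x2^0 * x3^2 * (x1 + x2 + k * x3)^t
     + x1^0 * x2^2 * x3^1 * (x1 + x2 + k * x3)^t
     - x1^0 * x2^1 * x3^2 * (x1 + x2 + k * x3)^t)"
    by (intro ext) (simp add: algebra_simps power2_eq_square)
  then show ?thesis by (simp only: tri_sum_add tri_sum_diff)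
qed

lemma tri_sum_vandermonde_power:
  assumes "finite X1" "card X1 = Suc c1" "finite X2" "card X2 = Suc c2"
    "finite X3" "card X3 = Suc c3"
  shows "t + 3 < c1 + c2 + c3 \<Longrightarrow>
      tri_sum X1 X2 X3 (\<lambda>x1 x2 x3. vandermonde3 x1 x2 x3 * (x1 + x2 + k * x3)^t) = 0"
    and "t + 3 = c1 + c2 + c3 \<Longrightarrow>
      tri_sum X1 X2 X3 (\<lambda>x1 x2 x3. vandermonde3 x1 x2 x3 * (x1 + x2 + k * x3)^t)
        = sumset_coeff c1 c2 c3 k t * (disc X1 * disc X2 * disc X3)"
proof -
  note low = tri_sum_power_low[OF assms] and top = tri_sum_power_top[OF assms]
  show "t + 3 < c1 + c2 + c3 \<Longrightarrow>
      tri_sum X1 X2 X3 (\<lambda>x1 x2 x3. vandermonde3 x1 x2 x3 * (x1 + x2 + k * x3)^t) = 0"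
    unfolding tri_sum_vandermonde_split
    using low[of 2 1 0 t k] low[of 2 0 1 t k] low[of 1 2 0 t k]
      low[of 1 0 2 t k] low[of 0 2 1 t k] low[of 0 1 2 t k]
    by simp
  show "t + 3 = c1 + c2 + c3 \<Longrightarrow>
      tri_sum X1 X2 X3 (\<lambda>x1 x2 x3. vandermonde3 x1 x2 x3 * (x1 + x2 + k * x3)^t)
        = sumset_coeff c1 c2 c3 k t * (disc X1 * disc X2 * disc X3)"
    unfolding tri_sum_vandermonde_split sumset_coeff_def
    using top[of 2 1 0 t k] top[of 2 0 1 t k] top[of 1 2 0 t k]
      top[of 1 0 2 t k] top[of 0 2 1 t k] top[of 0 1 2 t k]
    by (simp add: algebra_simps)
qed

lemma poly_as_sum_upto:
  fixes q :: "int poly"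
  assumes "degree q \<le> t"
  shows "poly q y = (\<Sum>i\<le>t. coeff q i * y^i)"
proof -
  have "poly q y = (\<Sum>i\<le>degree q. coeff q i * y^i)" by (simp add: poly_altdef)
  also have "\<dots> = (\<Sum>i\<le>t. coeff q i * y^i)"
    by (rule sum.mono_neutral_left) (use assms in \<open>auto simp: coeff_eq_0\<close>)
  finally show ?thesis .
qed

lemma tri_sum_vandermonde_poly:
  assumes "finite X1" "card X1 = Suc c1" "finite X2" "card X2 = Suc c2"
    "finite X3" "card X3 = Suc c3" "degree q \<le> t" "t + 3 = c1 + c2 + c3"
  shows "tri_sum X1 X2 X3 (\<lambda>x1 x2 x3. vandermonde3 x1 x2 x3 * poly q (x1 + x2 + k * x3))
     = coeff q t * sumset_coeff c1 c2 c3 k t * (disc X1 * disc X2 * disc X3)"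
proof -
  define D where "D = disc X1 * disc X2 * disc X3"
  have "tri_sum X1 X2 X3 (\<lambda>x1 x2 x3. vandermonde3 x1 x2 x3 * poly q (x1 + x2 + k * x3)) =
    tri_sum X1 X2 X3 (\<lambda>x1 x2 x3. \<Sum>i\<le>t. coeff q i *
      (vandermonde3 x1 x2 x3 * (x1 + x2 + k * x3)^i))"
    unfolding poly_as_sum_upto[OF assms(7)] by (simp add: sum_distrib_left mult_ac)
  also have "\<dots> = (\<Sum>i\<le>t. coeff q i *
      tri_sum X1 X2 X3 (\<lambda>x1 x2 x3. vandermonde3 x1 x2 x3 * (x1 + x2 + k * x3)^i))"
    by (simp add: tri_sum_sum tri_sum_cmult)
  also have "\<dots> = (\<Sum>i\<le>t. if i = t then coeff q t * (sumset_coeff c1 c2 c3 k t * D) else 0)"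
  proof (rule sum.cong)
    fix i assume "i \<in> {..t}"
    then show "coeff q i *
        tri_sum X1 X2 X3 (\<lambda>x1 x2 x3. vandermonde3 x1 x2 x3 * (x1 + x2 + k * x3)^i) =
      (if i = t then coeff q t * (sumset_coeff c1 c2 c3 k t * D) else 0)"
      using tri_sum_vandermonde_power[OF assms(1-6), of i k] assms(8) unfolding D_def by auto
  qed simp
  finally show ?thesis unfolding D_def by simp
qed

section \<open>The lower bound for restricted sumsets modulo p\<close>

definition restricted_sumset :: "nat \<Rightarrow> nat \<Rightarrow> nat set \<Rightarrow> nat set \<Rightarrow> nat set \<Rightarrow> nat set" where
  "restricted_sumset p k A1 A2 A3 = {(a1 + a2 + k * a3) mod p | a1 a2 a3.
       a1 \<in> A1 \<and> a2 \<in> A2 \<and> a3 \<in> A3 \<and> a1 \<noteq> a2 \<and> a1 \<noteq> a3 \<and> a2 \<noteq> a3}"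

lemma Sk_eq_restricted_sumset: "Sk p k A = restricted_sumset p k A A A"
  unfolding Sk_def restricted_sumset_def ..

lemma restricted_sumset_mono:
  "A1 \<subseteq> B1 \<Longrightarrow> A2 \<subseteq> B2 \<Longrightarrow> A3 \<subseteq> B3 \<Longrightarrow>
     restricted_sumset p k A1 A2 A3 \<subseteq> restricted_sumset p k B1 B2 B3"
  unfolding restricted_sumset_def by blast

lemma restricted_sumset_residues: "0 < p \<Longrightarrow> restricted_sumset p k A1 A2 A3 \<subseteq> {0..<p}"
  unfolding restricted_sumset_def by auto

text \<open>Distinct residues have differences prime to p, so p does not divide disc.\<close>
lemma disc_not_dvd:
  assumes "prime p" "A \<subseteq> {0..<p}"
  shows "\<not> int p dvd disc (int ` A)"
proof
  assume "int p dvd disc (int ` A)"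
  then obtain a b where ab: "a \<in> A" "b \<in> A" "a \<noteq> b" "int p dvd (int a - int b)"
    unfolding disc_def node_prod_def using assms finite_subset[OF assms(2)]
    by (auto simp: prime_dvd_prod_iff)
  then have "int a - int b \<noteq> 0" by simp
  from dvd_imp_le_int[OF this ab(4)] have "int p \<le> \<bar>int a - int b\<bar>" by simp
  moreover have "a < p" "b < p" using ab assms by auto
  ultimately show False by linarith
qed

lemma tri_sum_dvd:
  assumes "\<And>x1 x2 x3. x1 \<in> X1 \<Longrightarrow> x2 \<in> X2 \<Longrightarrow> x3 \<in> X3 \<Longrightarrow> m dvd g x1 x2 x3"
  shows "m dvd tri_sum X1 X2 X3 g"
  unfolding tri_sum_def by (intro dvd_sum dvd_mult2 assms)

lemma vanishing_poly_dvd: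
  assumes "finite T" "N mod p \<in> T"
  shows "int p dvd poly (\<Prod>s\<in>T. [:- int s, 1:]) (int N)"
proof -
  have "int p dvd int N - int (N mod p)" by (simp add: zmod_int)
  also have "\<dots> dvd (\<Prod>s\<in>T. int N - int s)" using assms by (rule dvd_prodI)
  finally show ?thesis by (simp add: poly_prod)
qed

lemma restricted_sumset_lower_bound:
  fixes p k :: nat and A1 A2 A3 :: "nat set"
  assumes "prime p" "A1 \<subseteq> {0..<p}" "A2 \<subseteq> {0..<p}" "A3 \<subseteq> {0..<p}"
    and "card A1 = Suc c1" "card A2 = Suc c2" "card A3 = Suc c3"
    and "t + 3 = c1 + c2 + c3" "t < p" "\<not> int p dvd sumset_coeff c1 c2 c3 (int k) t"
  shows "t + 1 \<le> card (restricted_sumset p k A1 A2 A3)"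
proof (rule ccontr)
  let ?S = "restricted_sumset p k A1 A2 A3"
  assume "\<not> t + 1 \<le> card ?S"
  moreover have "?S \<subseteq> {0..<p}" using assms(1) prime_gt_0_nat restricted_sumset_residues by blast
  ultimately obtain T where T: "?S \<subseteq> T" "T \<subseteq> {0..<p}" "card T = t"
    using exists_subset_between[of ?S t "{0..<p}"] assms(9) by auto
  then have fin_T: "finite T" using finite_subset by blast
  define q :: "int poly" where "q = (\<Prod>s\<in>T. [:- int s, 1:])"
  have deg: "degree q = t" unfolding q_def using T fin_T by (subst degree_prod_eq_sum_degree) auto
  moreover have "lead_coeff q = 1" unfolding q_def by (simp add: lead_coeff_prod)
  ultimately have lead: "coeff q t = 1" by simp
  define X1 X2 X3 where "X1 = int ` A1" and "X2 = int ` A2" and "X3 = int ` A3"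
  have "finite A1" "finite A2" "finite A3" using assms(2-4) finite_subset by blast+
  then have fin: "finite X1" "finite X2" "finite X3" unfolding X1_def X2_def X3_def by auto
  have cards: "card X1 = Suc c1" "card X2 = Suc c2" "card X3 = Suc c3"
    unfolding X1_def X2_def X3_def using assms(5-7) by (simp_all add: card_image)
  have "int p dvd tri_sum X1 X2 X3 (\<lambda>x1 x2 x3. vandermonde3 x1 x2 x3 * poly q (x1 + x2 + int k * x3))"
  proof (rule tri_sum_dvd)
    fix x1 x2 x3 assume x: "x1 \<in> X1" "x2 \<in> X2" "x3 \<in> X3"
    show "int p dvd vandermonde3 x1 x2 x3 * poly q (x1 + x2 + int k * x3)"
    proof (cases "x1 \<noteq> x2 \<and> x1 \<noteq> x3 \<and> x2 \<noteq> x3")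
      case True
      from x obtain a1 a2 a3 where a: "x1 = int a1" "x2 = int a2" "x3 = int a3"
        "a1 \<in> A1" "a2 \<in> A2" "a3 \<in> A3" unfolding X1_def X2_def X3_def by auto
      then have "(a1 + a2 + k * a3) mod p \<in> T"
        using True T(1) unfolding restricted_sumset_def by auto
      then have "int p dvd poly q (int (a1 + a2 + k * a3))"
        unfolding q_def by (rule vanishing_poly_dvd[OF fin_T])
      then show ?thesis unfolding a by simp
    qed auto
  qed
  also have "tri_sum X1 X2 X3 (\<lambda>x1 x2 x3. vandermonde3 x1 x2 x3 * poly q (x1 + x2 + int k * x3))
      = sumset_coeff c1 c2 c3 (int k) t * (disc X1 * disc X2 * disc X3)"
    using tri_sum_vandermonde_poly[OF fin(1) cards(1) fin(2) cards(2) fin(3) cards(3), of q t "int k"]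
      deg lead assms(8) by simp
  finally show False
    using assms(1,10) disc_not_dvd[OF assms(1,2)] disc_not_dvd[OF assms(1,3)]
      disc_not_dvd[OF assms(1,4)]
    unfolding X1_def X2_def X3_def by (simp add: prime_dvd_mult_iff)
qed

section \<open>Evaluating the extracted coefficient\<close>

definition falling :: "nat \<Rightarrow> nat \<Rightarrow> int" where
  "falling x f = (\<Prod>j<f. int x - int j)"

lemma falling_small: "falling x 0 = 1" "falling x 1 = int x" "falling x 2 = int x * (int x - 1)"
  by (simp_all add: falling_def numeral_2_eq_2 lessThan_Suc)

lemma falling_zero: "x < f \<Longrightarrow> falling x f = 0"
  unfolding falling_def by (rule prod_zero) auto

lemma fact_falling: "f \<le> x \<Longrightarrow> (fact x :: int) = falling x f * fact (x - f)"
proof (induction f)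
  case 0
  then show ?case by (simp add: falling_def)
next
  case (Suc f)
  then have "x - f = Suc (x - Suc f)" by simp
  then have "(fact (x - f) :: int) = (int x - int f) * fact (x - Suc f)"
    using Suc.prems by (simp add: of_nat_diff)
  then show ?case using Suc by (simp add: falling_def lessThan_Suc)
qed

lemma mono_coeff_fact:
  assumes "f1 + f2 + f3 + t = a + b + c"
  shows "mono_coeff a b c k t f1 f2 f3 * fact a * fact b * fact c =
    fact t * falling a f1 * falling b f2 * falling c f3 * k^(c - f3)"
proof (cases "f1 \<le> a \<and> f2 \<le> b \<and> f3 \<le> c")
  case False
  then show ?thesis unfolding mono_coeff_def
    using falling_zero[of a f1] falling_zero[of b f2] falling_zero[of c f3] by auto
next
  case True
  define L I where "L = c - f3" and "I = a - f1"
  have L: "L \<le> t" and I: "I \<le> t - L" and rest: "t - L - I = b - f2"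
    using True assms unfolding L_def I_def by linarith+
  have "(t choose L) * ((t - L) choose I) * fact L * fact I * fact (t - L - I)
      = (fact L * fact (t - L) * (t choose L) :: nat)"
    by (simp only: binomial_fact_lemma[OF I, symmetric] mult_ac)
  also have "\<dots> = fact t" by (rule binomial_fact_lemma[OF L])
  finally have binom: "int ((t choose L) * ((t - L) choose I)) * fact (c - f3) * fact (a - f1)
      * fact (b - f2) = (fact t :: int)"
    unfolding L_def I_def rest[unfolded L_def I_def] by (metis of_nat_fact of_nat_mult)
  have "(fact a :: int) = falling a f1 * fact (a - f1)" "(fact b :: int) = falling b f2 * fact (b - f2)"
    "(fact c :: int) = falling c f3 * fact (c - f3)" using fact_falling True by auto
  then show ?thesis unfolding mono_coeff_def using True binom[symmetric] L_def I_def
    by (simp add: mult_ac)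
qed

text \<open>The quadratic form governing the non-vanishing of the coefficient.\<close>
definition key_quadratic :: "int \<Rightarrow> int \<Rightarrow> int \<Rightarrow> int \<Rightarrow> int" where
  "key_quadratic k a b c = k^2 * a * b - k * c * (a + b - 1) + c * (c - 1)"

lemma sumset_coeff_closed_form:
  assumes "t + 3 = a + b + c" "2 \<le> c"
  shows "sumset_coeff a b c k t * fact a * fact b * fact c =
    fact t * k^(c-2) * (int a - int b) * key_quadratic k (int a) (int b) (int c)"
proof -
  let ?F = "fact a * fact b * fact c :: int"
  have mono: "mono_coeff a b c k t f1 f2 f3 * ?F =
      fact t * falling a f1 * falling b f2 * falling c f3 * k^(c-2) * k^(2-f3)"
    if "f3 \<le> 2" "f1 + f2 + f3 = 3" for f1 f2 f3
  proof -
    have "c - f3 = (c-2) + (2-f3)" using that assms(2) by linarith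
    then have "k^(c-f3) = k^(c-2) * k^(2-f3)" by (metis power_add)
    then show ?thesis using mono_coeff_fact[of f1 f2 f3 t a b c k] that assms(1)
      by (simp add: mult.assoc)
  qed
  note falling_vals = falling_small falling_small(2)[unfolded One_nat_def]
  have vals: "mono_coeff a b c k t 2 1 0 * ?F = fact t * (int a * (int a - 1)) * int b * k^(c-2) * k^2"
    "mono_coeff a b c k t 2 0 1 * ?F = fact t * (int a * (int a - 1)) * int c * k^(c-2) * k"
    "mono_coeff a b c k t 1 2 0 * ?F = fact t * int a * (int b * (int b - 1)) * k^(c-2) * k^2"
    "mono_coeff a b c k t 1 0 2 * ?F = fact t * int a * (int c * (int c - 1)) * k^(c-2)"
    "mono_coeff a b c k t 0 2 1 * ?F = fact t * (int b * (int b - 1)) * int c * k^(c-2) * k"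
    "mono_coeff a b c k t 0 1 2 * ?F = fact t * int b * (int c * (int c - 1)) * k^(c-2)"
    using mono[of 2 1 0] mono[of 2 0 1] mono[of 1 2 0] mono[of 1 0 2] mono[of 0 2 1] mono[of 0 1 2]
    by (simp_all add: falling_vals)
  have "sumset_coeff a b c k t * ?F =
       mono_coeff a b c k t 2 1 0 * ?F - mono_coeff a b c k t 2 0 1 * ?F
     - mono_coeff a b c k t 1 2 0 * ?F + mono_coeff a b c k t 1 0 2 * ?F
     + mono_coeff a b c k t 0 2 1 * ?F - mono_coeff a b c k t 0 1 2 * ?F"
    unfolding sumset_coeff_def by (simp add: algebra_simps)
  also have "\<dots> = fact t * k^(c-2) * (int a - int b) * key_quadratic k (int a) (int b) (int c)"
    unfolding vals key_quadratic_def by algebra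
  finally show ?thesis by (simp add: mult.assoc)
qed

lemma sumset_coeff_not_dvd:
  assumes "prime p" "t + 3 = a + b + c" "2 \<le> c" "t < p" "\<not> int p dvd k"
    "\<not> int p dvd (int a - int b)" "\<not> int p dvd key_quadratic k (int a) (int b) (int c)"
  shows "\<not> int p dvd sumset_coeff a b c k t"
proof
  assume "int p dvd sumset_coeff a b c k t"
  then have "int p dvd sumset_coeff a b c k t * fact a * fact b * fact c" by simp
  then have "int p dvd fact t * k^(c-2) * (int a - int b) * key_quadratic k (int a) (int b) (int c)"
    unfolding sumset_coeff_closed_form[OF assms(2,3)] .
  moreover have "\<not> int p dvd fact t"
    using prime_dvd_fact_iff[OF assms(1)] assms(4) of_nat_dvd_iff[of p "fact t"]
    by (simp add: of_nat_fact)
  moreover have "prime (int p)" using assms(1) by simp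
  moreover have "\<not> int p dvd k^(c-2)" using calculation(3) assms(5) prime_dvd_power by blast
  ultimately show False using assms(6,7) by (simp add: prime_dvd_mult_iff)
qed

lemma Sk_lower_bound:
  fixes p k :: nat and A :: "nat set"
  assumes "prime p" "A \<subseteq> {0..<p}" "a + 1 \<le> card A" "b + 1 \<le> card A" "c + 1 \<le> card A"
    "t + 3 = a + b + c" "t < p" "2 \<le> c" "\<not> int p dvd int k"
    "\<not> int p dvd (int a - int b)" "\<not> int p dvd key_quadratic (int k) (int a) (int b) (int c)"
  shows "t + 1 \<le> card (Sk p k A)"
proof -
  obtain A1 A2 A3 where A: "A1 \<subseteq> A" "card A1 = Suc a" "A2 \<subseteq> A" "card A2 = Suc b"
    "A3 \<subseteq> A" "card A3 = Suc c"
    using obtain_subset_with_card_n assms(3-5) by (metis Suc_eq_plus1)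
  have "\<not> int p dvd sumset_coeff a b c (int k) t"
    by (rule sumset_coeff_not_dvd[OF assms(1,6,8,7,9,10,11)])
  then have "t + 1 \<le> card (restricted_sumset p k A1 A2 A3)"
    using restricted_sumset_lower_bound[OF assms(1) _ _ _ A(2,4,6) assms(6,7)] A assms(2) by blast
  also have "\<dots> \<le> card (Sk p k A)"
    unfolding Sk_eq_restricted_sumset
    using restricted_sumset_mono[OF A(1,3,5)] restricted_sumset_residues[of p k A A A]
      assms(1) prime_gt_0_nat by (metis card_mono finite_atLeastLessThan finite_subset)
  finally show ?thesis .
qed

section \<open>Part (i): the bound 3|A| - 6\<close>

lemma not_dvd_small: "0 < x \<Longrightarrow> x < int p \<Longrightarrow> \<not> int p dvd x"
  using zdvd_imp_le by fastforce

text \<open>Take (a, b, c) = (n - 1, n - 2, n - 1): then key_quadratic = (n-1)(n-2)(k-1)^2.\<close>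
lemma Sk_card_bound:
  fixes p k n :: nat and A :: "nat set"
  assumes "prime p" "A \<subseteq> {0..<p}" "3 \<le> k" "k \<le> p - 1" "3 \<le> n" "n \<le> card A" "3 * n \<le> p + 6"
  shows "3 * n - 6 \<le> card (Sk p k A)"
proof -
  have p2: "p \<ge> 2" using assms(1) prime_ge_2_nat by blast
  then have p4: "p \<ge> 4" using assms(3,4) by linarith
  have "key_quadratic (int k) (int (n-1)) (int (n-2)) (int (n-1))
      = (int n - 1) * (int n - 2) * (int k - 1)^2"
    using assms(5) by (simp add: key_quadratic_def of_nat_diff algebra_simps power2_eq_square)
  moreover have "\<not> int p dvd (int n - 1)" "\<not> int p dvd (int n - 2)" "\<not> int p dvd (int k - 1)"
    by (rule not_dvd_small; use assms(3-5,7) p4 in auto)+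
  moreover have "prime (int p)" using assms(1) by simp
  ultimately have nQ: "\<not> int p dvd key_quadratic (int k) (int (n-1)) (int (n-2)) (int (n-1))"
    by (simp add: prime_dvd_mult_iff prime_dvd_power_iff)
  have nk: "\<not> int p dvd int k" by (rule not_dvd_small) (use assms(3,4) p2 in auto)
  have nab: "\<not> int p dvd (int (n-1) - int (n-2))" using assms(5) p2 by (simp add: of_nat_diff)
  have "3 * n - 7 + 1 \<le> card (Sk p k A)"
    by (rule Sk_lower_bound[OF assms(1,2), of "n-1" "n-2" "n-1"])
      (use assms(5-7) p4 nk nab nQ in auto)
  then show ?thesis using assms(5) by linarith
qed

section \<open>Part (iii): the sumset is everything\<close>

lemma Sk_full_of_card:
  assumes "prime p" "p \<le> card (Sk p k A)"
  shows "Sk p k A = {0..<p}"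
proof -
  have "Sk p k A \<subseteq> {0..<p}"
    unfolding Sk_eq_restricted_sumset using assms(1) prime_gt_0_nat restricted_sumset_residues by blast
  moreover have "card (Sk p k A) = card {0..<p}"
    using assms(2) card_mono[OF _ calculation] by simp
  ultimately show ?thesis by (simp add: card_subset_eq)
qed

text \<open>A triple with a + b + c = p + 2 yields t = p - 1, hence a full sumset.\<close>
lemma Sk_full_from_triple:
  fixes p k :: nat and A :: "nat set"
  assumes "prime p" "A \<subseteq> {0..<p}" "a + 1 \<le> card A" "b + 1 \<le> card A" "c + 1 \<le> card A"
    "a + b + c = p + 2" "2 \<le> c" "\<not> int p dvd int k"
    "\<not> int p dvd (int a - int b)" "\<not> int p dvd key_quadratic (int k) (int a) (int b) (int c)"
  shows "Sk p k A = {0..<p}"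
proof -
  have "p - 1 + 1 \<le> card (Sk p k A)"
    by (rule Sk_lower_bound[OF assms(1-5) _ _ assms(7-10)])
      (use assms(6) prime_gt_1_nat[OF assms(1)] in auto)
  then show ?thesis using Sk_full_of_card[OF assms(1)] prime_gt_1_nat[OF assms(1)] by simp
qed

lemma key_quadratic_gap1:
  fixes k a b c p :: int
  assumes "a = b + 1" "p = 2 * b + c - 1"
  shows "4 * key_quadratic k a b c =
    (c - 1) * (c * (k + 2)^2 - 3 * k^2) + p * (k^2 * (p + 4 - 2 * c) - 4 * k * c)"
  unfolding key_quadratic_def assms by (simp add: algebra_simps power2_eq_square)

lemma key_quadratic_gap2:
  fixes k a b c p :: int
  assumes "a = b + 2" "p = 2 * b + c"
  shows "4 * key_quadratic k a b c =
    c * (c * (k + 2)^2 - 4 * (k^2 + k + 1)) + p * (k^2 * (p + 4 - 2 * c) - 4 * k * c)"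
  unfolding key_quadratic_def assms by (simp add: algebra_simps power2_eq_square)

lemma Sk_full_gap1:
  fixes p k c M :: nat and A :: "nat set"
  assumes "prime p" "odd p" "A \<subseteq> {0..<p}" "card A = M + 1" "even c" "2 \<le> c" "c \<le> M"
    "p + 3 \<le> 2 * M + c" "M < p" "\<not> int p dvd int k"
    "\<not> int p dvd (int c * (int k + 2)^2 - 3 * (int k)^2)"
  shows "Sk p k A = {0..<p}"
proof -
  define a where "a = (p + 3 - c) div 2"
  define b where "b = a - 1"
  have "even (p + 3 - c)" using assms(2,5,7,9) by simp
  then have "2 * a = p + 3 - c" unfolding a_def by simp
  then have ab: "a = b + 1" "a + b + c = p + 2" "a \<le> M"
    using assms(6-9) unfolding b_def by linarith+
  have "4 * key_quadratic (int k) (int a) (int b) (int c) =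
      (int c - 1) * (int c * (int k + 2)^2 - 3 * (int k)^2)
      + int p * ((int k)^2 * (int p + 4 - 2 * int c) - 4 * int k * int c)"
    by (rule key_quadratic_gap1) (use ab in auto)
  moreover have "\<not> int p dvd (int c - 1)" by (rule not_dvd_small) (use assms(6,7,9) in auto)
  moreover have "prime (int p)" using assms(1) by simp
  ultimately have nQ: "\<not> int p dvd key_quadratic (int k) (int a) (int b) (int c)"
  proof (intro notI)
    assume "int p dvd key_quadratic (int k) (int a) (int b) (int c)"
    then have "int p dvd 4 * key_quadratic (int k) (int a) (int b) (int c)" by simp
    with \<open>4 * key_quadratic _ _ _ _ = _\<close> have "int p dvd (int c - 1) * (int c * (int k + 2)^2 - 3 * (int k)^2)"
      by (simp add: dvd_add_left_iff)
    then show False using assms(11) \<open>\<not> int p dvd (int c - 1)\<close> \<open>prime (int p)\<close>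
      by (simp add: prime_dvd_mult_iff)
  qed
  have "\<not> int p dvd (int a - int b)"
    using ab not_dvd_small[of 1 p] prime_gt_1_nat[OF assms(1)] by simp
  then show ?thesis
    using Sk_full_from_triple[OF assms(1,3) _ _ _ ab(2) assms(6,10) _ nQ] ab assms(4,7) by simp
qed

lemma Sk_full_gap2:
  fixes p k c M :: nat and A :: "nat set"
  assumes "prime p" "odd p" "A \<subseteq> {0..<p}" "card A = M + 1" "odd c" "3 \<le> c" "c \<le> M"
    "p + 4 \<le> 2 * M + c" "M < p" "\<not> int p dvd int k"
    "\<not> int p dvd (int c * (int k + 2)^2 - 4 * ((int k)^2 + int k + 1))"
  shows "Sk p k A = {0..<p}"
proof -
  define a where "a = (p + 4 - c) div 2"
  define b where "b = a - 2"
  have "even (p + 4 - c)" using assms(2,5,7,9) by simp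
  then have "2 * a = p + 4 - c" unfolding a_def by simp
  then have ab: "a = b + 2" "a + b + c = p + 2" "a \<le> M"
    using assms(6-9) unfolding b_def by linarith+
  have "4 * key_quadratic (int k) (int a) (int b) (int c) =
      int c * (int c * (int k + 2)^2 - 4 * ((int k)^2 + int k + 1))
      + int p * ((int k)^2 * (int p + 4 - 2 * int c) - 4 * int k * int c)"
    by (rule key_quadratic_gap2) (use ab in auto)
  moreover have "\<not> int p dvd int c" by (rule not_dvd_small) (use assms(6,7,9) in auto)
  moreover have "prime (int p)" using assms(1) by simp
  ultimately have nQ: "\<not> int p dvd key_quadratic (int k) (int a) (int b) (int c)"
  proof (intro notI)
    assume "int p dvd key_quadratic (int k) (int a) (int b) (int c)"
    then have "int p dvd 4 * key_quadratic (int k) (int a) (int b) (int c)" by simp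
    with \<open>4 * key_quadratic _ _ _ _ = _\<close> have "int p dvd int c * (int c * (int k + 2)^2 - 4 * ((int k)^2 + int k + 1))"
      by (simp add: dvd_add_left_iff)
    then show False using assms(11) \<open>\<not> int p dvd int c\<close> \<open>prime (int p)\<close>
      by (simp add: prime_dvd_mult_iff)
  qed
  have "p \<noteq> 2" using assms(2) by auto
  then have "p \<ge> 3" using prime_ge_2_nat[OF assms(1)] by linarith
  then have "\<not> int p dvd (int a - int b)" using ab not_dvd_small[of 2 p] by simp
  then show ?thesis
    using Sk_full_from_triple[OF assms(1,3) _ _ _ ab(2) _ assms(10) _ nQ] ab assms(4,6,7) by simp
qed

text \<open>The two admissible values c and c + 2 cannot both be bad, for p \<ge> 5 and p not dividing k.\<close>
lemma gap1_choice:
  fixes c k :: int and p :: nat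
  assumes "prime p" "p \<ge> 5" "\<not> int p dvd k"
    "int p dvd (c * (k + 2)^2 - 3 * k^2)" "int p dvd ((c + 2) * (k + 2)^2 - 3 * k^2)"
  shows False
proof -
  have pr: "prime (int p)" using assms(1) by simp
  have "int p dvd ((c + 2) * (k + 2)^2 - 3 * k^2) - (c * (k + 2)^2 - 3 * k^2)"
    using assms(5,4) by (rule dvd_diff)
  then have "int p dvd 2 * (k + 2)^2" by (simp add: algebra_simps)
  moreover have "\<not> int p dvd 2" by (rule not_dvd_small) (use assms(2) in auto)
  ultimately have "int p dvd (k + 2)" using pr by (simp add: prime_dvd_mult_iff prime_dvd_power_iff)
  then have "int p dvd c * (k + 2)^2" by (simp add: power2_eq_square)
  from dvd_diff[OF this assms(4)] have "int p dvd 3 * k^2" by simp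
  moreover have "\<not> int p dvd 3" by (rule not_dvd_small) (use assms(2) in auto)
  ultimately show False using pr assms(3) by (simp add: prime_dvd_mult_iff prime_dvd_power_iff)
qed

lemma gap2_choice:
  fixes c k :: int and p :: nat
  assumes "prime p" "p \<ge> 5"
    "int p dvd (c * (k + 2)^2 - 4 * (k^2 + k + 1))" "int p dvd ((c + 2) * (k + 2)^2 - 4 * (k^2 + k + 1))"
  shows False
proof -
  have pr: "prime (int p)" using assms(1) by simp
  have "int p dvd ((c + 2) * (k + 2)^2 - 4 * (k^2 + k + 1)) - (c * (k + 2)^2 - 4 * (k^2 + k + 1))"
    using assms(4,3) by (rule dvd_diff)
  then have "int p dvd 2 * (k + 2)^2" by (simp add: algebra_simps)
  moreover have "\<not> int p dvd 2" by (rule not_dvd_small) (use assms(2) in auto)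
  ultimately have k2: "int p dvd (k + 2)" using pr by (simp add: prime_dvd_mult_iff prime_dvd_power_iff)
  then have "int p dvd c * (k + 2)^2" by (simp add: power2_eq_square)
  from dvd_diff[OF this assms(3)] have "int p dvd 4 * (k^2 + k + 1)" by (simp add: add.assoc)
  moreover have "int p dvd (k + 2) * (4 * (k - 1))" using k2 by (rule dvd_mult2)
  ultimately have "int p dvd 4 * (k^2 + k + 1) - (k + 2) * (4 * (k - 1))" by (rule dvd_diff)
  then have "int p dvd 3 * 4" by (simp add: algebra_simps power2_eq_square)
  moreover have "\<not> int p dvd 3" "\<not> int p dvd 4" by (rule not_dvd_small; use assms(2) in auto)+
  ultimately show False using prime_dvd_mult_iff[OF pr, of 3 4] by simp
qed

lemma Sk_full_even_size:
  fixes p k M :: nat and A :: "nat set"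
  assumes "prime p" "5 \<le> p" "A \<subseteq> {0..<p}" "card A = M + 1" "even M" "M < p" "p + 5 \<le> 3 * M"
    "\<not> int p dvd int k"
  shows "Sk p k A = {0..<p}"
proof -
  have odd: "odd p" using assms(1,2) by (simp add: prime_odd_nat)
  define c where "c = M - 2"
  have c_props: "even c" "2 \<le> c" "c + 2 = M" "p + 3 \<le> 2 * M + c"
    using assms(2,5,7) unfolding c_def by auto
  consider (small) "\<not> int p dvd (int c * (int k + 2)^2 - 3 * (int k)^2)"
    | (large) "\<not> int p dvd (int (c + 2) * (int k + 2)^2 - 3 * (int k)^2)"
    using gap1_choice[OF assms(1,2,8), of "int c"] by (auto simp: add.commute)
  then show ?thesis
  proof cases
    case small
    show ?thesis
      by (rule Sk_full_gap1[OF assms(1) odd assms(3,4) _ _ _ _ assms(6,8) small]) (use c_props in auto)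
  next
    case large
    show ?thesis
      by (rule Sk_full_gap1[OF assms(1) odd assms(3,4) _ _ _ _ assms(6,8) large]) (use c_props in auto)
  qed
qed

lemma Sk_full_odd_size:
  fixes p k M :: nat and A :: "nat set"
  assumes "prime p" "5 \<le> p" "A \<subseteq> {0..<p}" "card A = M + 1" "odd M" "M < p" "p + 5 \<le> 3 * M"
    "\<not> int p dvd int k"
  shows "Sk p k A = {0..<p}"
proof -
  have odd: "odd p" using assms(1,2) by (simp add: prime_odd_nat)
  then have "3 * M \<noteq> p + 5" using assms(5) by presburger
  define c where "c = M - 2"
  have c_props: "odd c" "3 \<le> c" "c + 2 = M" "p + 4 \<le> 2 * M + c"
    using \<open>3 * M \<noteq> p + 5\<close> assms(2,5,7) unfolding c_def by auto presburger+
  consider (small) "\<not> int p dvd (int c * (int k + 2)^2 - 4 * ((int k)^2 + int k + 1))"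
    | (large) "\<not> int p dvd (int (c + 2) * (int k + 2)^2 - 4 * ((int k)^2 + int k + 1))"
    using gap2_choice[OF assms(1,2), of "int c"] by (auto simp: add.commute)
  then show ?thesis
  proof cases
    case small
    show ?thesis
      by (rule Sk_full_gap2[OF assms(1) odd assms(3,4) _ _ _ _ assms(6,8) small]) (use c_props in auto)
  next
    case large
    show ?thesis
      by (rule Sk_full_gap2[OF assms(1) odd assms(3,4) _ _ _ _ assms(6,8) large]) (use c_props in auto)
  qed
qed

lemma Sk_full:
  fixes p k :: nat and A :: "nat set"
  assumes "prime p" "A \<subseteq> {0..<p}" "3 \<le> k" "k \<le> p - 1" "3 * card A \<ge> p + 8"
  shows "Sk p k A = {0..<p}"
proof -
  have p2: "p \<ge> 2" using assms(1) prime_ge_2_nat by blast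
  have "p \<noteq> 4" using assms(1) by auto
  then have p5: "p \<ge> 5" using assms(3,4) p2 by linarith
  have "card A \<le> p" using card_mono[OF _ assms(2)] by simp
  define M where "M = card A - 1"
  have M: "card A = M + 1" "M < p" "p + 5 \<le> 3 * M"
    using assms(5) \<open>card A \<le> p\<close> p5 unfolding M_def by linarith+
  have nk: "\<not> int p dvd int k" by (rule not_dvd_small) (use assms(3,4) p2 in auto)
  show ?thesis
    using Sk_full_even_size[OF assms(1) p5 assms(2) M(1) _ M(2,3) nk]
      Sk_full_odd_size[OF assms(1) p5 assms(2) M(1) _ M(2,3) nk] by blast
qed

theorem mainTheorem9:
  fixes p k :: nat and A :: "nat set"
  assumes "prime p" and "3 \<le> k" and "k \<le> p - 1"
    and "A \<subseteq> {0..<p}" and "card A \<ge> k + 2"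
  shows "(3 * card A \<le> p + 6 \<longrightarrow> card (Sk p k A) \<ge> 3 * card A - 6)
       \<and> (3 * card A = p + 7 \<longrightarrow> card (Sk p k A) \<ge> p - 2)
       \<and> (3 * card A \<ge> p + 8 \<longrightarrow> Sk p k A = {0..<p})"
proof (intro conjI impI)
  assume "3 * card A \<le> p + 6"
  then show "card (Sk p k A) \<ge> 3 * card A - 6"
    using Sk_card_bound[OF assms(1,4,2,3), of "card A"] assms(2,5) by simp
next
  assume size: "3 * card A = p + 7"
  (* part (ii) is the bound of part (i) applied to |A| - 1 *)
  have "3 * (card A - 1) - 6 \<le> card (Sk p k A)"
    by (rule Sk_card_bound[OF assms(1,4,2,3)]) (use size assms(2,5) in auto)
  then show "card (Sk p k A) \<ge> p - 2" using size by linarith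
next
  assume "3 * card A \<ge> p + 8"
  then show "Sk p k A = {0..<p}" by (rule Sk_full[OF assms(1,4,2,3)])
qed

end
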